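(* Let $I=CPC$ (classical propositional logic). Then for every formula $\varphi$ (possibly containing $\square$), $\vdash_{L5(I)}\varphi\leftrightarrow\square\varphi$.
   Context: Formulas are built from a countable set $V$ of propositional variables using $\wedge,\vee,\rightarrow,\bot$ and the unary modal operator $\square$. Abbreviations: - $\neg\varphi:=\varphi\rightarrow\bot$; - $\varphi\leftrightarrow\psi:=(\varphi\rightarrow\psi)\wedge(\psi\rightarrow\varphi)$; - $\varphi\equiv\psi:=\square(\varphi\rightarrow\psi)\wedge\square(\psi\rightarrow\varphi)$. For an intermediate logic $I$ (intuitionistic propositional logic extended by axiom schemes that are classical tautologies), the deductive system $L5(I)$ has as axioms all instances of the schemes: (i) all formulas having the form of a theorem of $I$ (possibly containing $\square$); (ii) $\square\varphi\rightarrow\varphi$; (iii) $\square(\varphi\rightarrow\psi)\rightarrow(\square(\psi\rightarrow\chi)\rightarrow\square(\varphi\rightarrow\chi))$; (iv) $\square(\varphi\vee\psi)\rightarrow(\square\varphi\vee\square\psi)$; (v) $\square\varphi\rightarrow\square\square\varphi$; (vi) $\neg\square\varphi\rightarrow\square\neg\square\varphi$. In addition, all formulas $(\varphi\equiv\psi)\rightarrow(\chi[x:=\varphi]\equiv\chi[x:=\psi])$ and all formulas $\varphi\vee\neg\varphi$ are theorems. The rules are: - Modus Ponens; - Axiom Necessitation: from an axiom of the form (i)–(vi) infer $\square$ of it; this rule applies only to axioms (i)–(vi). $\vdash_{L5(I)}\varphi$ means $\varphi$ is derivable. *)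

theory Defs
  imports Main
begin

datatype fm = Var nat | Bot | And fm fm | Or fm fm | Imp fm fm | Box fm

definition Neg :: "fm \<Rightarrow> fm" where "Neg p = Imp p Bot"
definition Iff :: "fm \<Rightarrow> fm \<Rightarrow> fm" where "Iff p q = And (Imp p q) (Imp q p)"
definition Equiv :: "fm \<Rightarrow> fm \<Rightarrow> fm" where
  "Equiv p q = And (Box (Imp p q)) (Box (Imp q p))"

primrec subst :: "(nat \<Rightarrow> fm) \<Rightarrow> fm \<Rightarrow> fm" where
  "subst s (Var x) = s x"
| "subst s Bot = Bot"
| "subst s (And p q) = And (subst s p) (subst s q)"
| "subst s (Or p q) = Or (subst s p) (subst s q)"
| "subst s (Imp p q) = Imp (subst s p) (subst s q)"
| "subst s (Box p) = Box (subst s p)"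

definition subst1 :: "nat \<Rightarrow> fm \<Rightarrow> fm \<Rightarrow> fm" where
  "subst1 x p c = subst (Var(x := p)) c"

primrec boxfree :: "fm \<Rightarrow> bool" where
  "boxfree (Var x) = True"
| "boxfree Bot = True"
| "boxfree (And p q) = (boxfree p \<and> boxfree q)"
| "boxfree (Or p q) = (boxfree p \<and> boxfree q)"
| "boxfree (Imp p q) = (boxfree p \<and> boxfree q)"
| "boxfree (Box p) = False"

primrec cval :: "(nat \<Rightarrow> bool) \<Rightarrow> fm \<Rightarrow> bool" where
  "cval v (Var x) = v x"
| "cval v Bot = False"
| "cval v (And p q) = (cval v p \<and> cval v q)"
| "cval v (Or p q) = (cval v p \<or> cval v q)"
| "cval v (Imp p q) = (cval v p \<longrightarrow> cval v q)"
| "cval v (Box p) = False"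

text \<open>Theorems of I = CPC: the classical tautologies (box-free).\<close>
definition CPC_thm :: "fm \<Rightarrow> bool" where
  "CPC_thm p \<longleftrightarrow> boxfree p \<and> (\<forall>v. cval v p)"

inductive ax :: "fm \<Rightarrow> bool" where
  ax_i:   "CPC_thm p \<Longrightarrow> ax (subst s p)"
| ax_ii:  "ax (Imp (Box p) p)"
| ax_iii: "ax (Imp (Box (Imp p q)) (Imp (Box (Imp q r)) (Box (Imp p r))))"
| ax_iv:  "ax (Imp (Box (Or p q)) (Or (Box p) (Box q)))"
| ax_v:   "ax (Imp (Box p) (Box (Box p)))"
| ax_vi:  "ax (Imp (Neg (Box p)) (Box (Neg (Box p))))"

inductive L5 :: "fm \<Rightarrow> bool" where
  axiom: "ax p \<Longrightarrow> L5 p"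
| AN:    "ax p \<Longrightarrow> L5 (Box p)"
| MP:    "L5 (Imp p q) \<Longrightarrow> L5 p \<Longrightarrow> L5 q"
| SCP:   "L5 (Imp (Equiv p q) (Equiv (subst1 x p c) (subst1 x q c)))"
| TND:   "L5 (Or p (Neg p))"

end

theory Submission
  imports Defs
begin

(* Necessitating excluded middle and applying (iv) yields Box phi \<or> Box (Neg phi).
   By (ii), in the first case phi and Box phi both hold, in the second both fail;
   classical propositional reasoning then gives phi \<longleftrightarrow> Box phi. *)

lemma ax_tautology_instance:
  assumes "boxfree p" and "\<forall>v. cval v p"
  shows "ax (subst s p)"
  using assms by (intro ax_i) (simp add: CPC_thm_def)

lemma L5_box_or_box_neg: "L5 (Or (Box \<phi>) (Box (Neg \<phi>)))"
proof -
  have "ax (Or \<phi> (Neg \<phi>))"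
    using ax_tautology_instance[of "Or (Var 0) (Neg (Var 0))" "\<lambda>_. \<phi>"]
    by (simp add: Neg_def)
  then show ?thesis
    by (rule L5.MP[OF L5.axiom[OF ax_iv] L5.AN])
qed

theorem lemma6p1:
  fixes \<phi> :: fm
  shows "L5 (Iff \<phi> (Box \<phi>))"
proof -
  have case_split: "L5 (Imp (Or (Box \<phi>) (Box (Neg \<phi>)))
      (Imp (Imp (Box (Neg \<phi>)) (Neg \<phi>)) (Imp (Imp (Box \<phi>) \<phi>) (Iff \<phi> (Box \<phi>)))))"
    using ax_tautology_instance[of
        "Imp (Or (Var 1) (Var 2)) (Imp (Imp (Var 2) (Neg (Var 0)))
           (Imp (Imp (Var 1) (Var 0)) (Iff (Var 0) (Var 1))))"
        "\<lambda>n. [\<phi>, Box \<phi>, Box (Neg \<phi>)] ! n"]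
    by (auto simp: Neg_def Iff_def intro: L5.axiom)
  show ?thesis
    using L5.MP[OF L5.MP[OF L5.MP[OF case_split L5_box_or_box_neg]
        L5.axiom[OF ax_ii]] L5.axiom[OF ax_ii]] .
qed

end
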